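(* Let $g(t)$, $t\in[0,T)$, be the maximal Ricci flow solution on $S^1\times S^3$ of the form $g(t)=\phi^2dz^2+a^2\omega^1\otimes\omega^1+b^2\omega^2\otimes\omega^2+c^2\omega^3\otimes\omega^3$ starting from initial data with $0<a\le b\le c$, and let $\hat c(t)=\max_s c(s,t)$. Then the singular time satisfies $T\le \frac{\hat c(0)^2}{4}$.
   Context: $S^3=SU(2)$ carries a global left-invariant frame $E_1,E_2,E_3$ with $[E_i,E_j]=-2\epsilon_{ijk}E_k$ and dual coframe $\omega^i$; $z\in S^1=[0,2\pi)$, $\phi,a,b,c$ positive smooth $2\pi$-periodic functions; $s$ is the arclength coordinate $ds=\phi\,dz$. The Ricci flow $\partial_tg=-2\mathrm{Ric}(g)$ preserves this form. *)

theory Defs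
  imports "HOL-Analysis.Analysis"
begin

(* Functions of (z,t): z in R (2pi-periodic, i.e. on S^1), t in [0,T). *)

definition dz :: "(real \<Rightarrow> real \<Rightarrow> real) \<Rightarrow> real \<Rightarrow> real \<Rightarrow> real" where
  "dz f z t = deriv (\<lambda>x. f x t) z"

definition dt :: "real \<Rightarrow> (real \<Rightarrow> real \<Rightarrow> real) \<Rightarrow> real \<Rightarrow> real \<Rightarrow> real" where
  "dt T f z t = vector_derivative (\<lambda>s. f z s) (at t within {0..<T})"

fun iterd :: "real \<Rightarrow> bool list \<Rightarrow> (real \<Rightarrow> real \<Rightarrow> real) \<Rightarrow> real \<Rightarrow> real \<Rightarrow> real" where
  "iterd T [] f = f"
| "iterd T (True # w) f = dz (iterd T w f)"
| "iterd T (False # w) f = dt T (iterd T w f)"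

definition smooth_RT :: "real \<Rightarrow> (real \<Rightarrow> real \<Rightarrow> real) \<Rightarrow> bool" where
  "smooth_RT T f \<longleftrightarrow> (\<forall>w.
      continuous_on (UNIV \<times> {0..<T}) (\<lambda>p. iterd T w f (fst p) (snd p)) \<and>
      (\<forall>z. \<forall>t\<in>{0..<T}. (\<lambda>x. iterd T w f x t) differentiable (at z) \<and>
                         (\<lambda>s. iterd T w f z s) differentiable (at t within {0..<T})))"

definition ds :: "(real \<Rightarrow> real \<Rightarrow> real) \<Rightarrow> (real \<Rightarrow> real \<Rightarrow> real) \<Rightarrow> real \<Rightarrow> real \<Rightarrow> real" where
  "ds \<phi> f z t = dz f z t / \<phi> z t"

(* Ricci flow of g = phi^2 dz^2 + a^2 w1^2 + b^2 w2^2 + c^2 w3^2 on S^1 x S^3,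
   written as the equivalent PDE system for (phi,a,b,c) with [E_i,E_j] = -2 eps_ijk E_k. *)
definition RF_solution ::
  "real \<Rightarrow> (real \<Rightarrow> real \<Rightarrow> real) \<Rightarrow> (real \<Rightarrow> real \<Rightarrow> real) \<Rightarrow> (real \<Rightarrow> real \<Rightarrow> real)
   \<Rightarrow> (real \<Rightarrow> real \<Rightarrow> real) \<Rightarrow> bool" where
  "RF_solution T \<phi> a b c \<longleftrightarrow>
     smooth_RT T \<phi> \<and> smooth_RT T a \<and> smooth_RT T b \<and> smooth_RT T c \<and>
     (\<forall>z. \<forall>t\<in>{0..<T}.
        \<phi> (z + 2*pi) t = \<phi> z t \<and> a (z + 2*pi) t = a z t \<and>
        b (z + 2*pi) t = b z t \<and> c (z + 2*pi) t = c z t \<and>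
        0 < \<phi> z t \<and> 0 < a z t \<and> 0 < b z t \<and> 0 < c z t \<and>
        dt T a z t = ds \<phi> (ds \<phi> a) z t
            + ds \<phi> a z t * (ds \<phi> b z t / b z t + ds \<phi> c z t / c z t)
            - 2 * ((a z t)^4 - ((b z t)^2 - (c z t)^2)^2) / (a z t * (b z t)^2 * (c z t)^2) \<and>
        dt T b z t = ds \<phi> (ds \<phi> b) z t
            + ds \<phi> b z t * (ds \<phi> a z t / a z t + ds \<phi> c z t / c z t)
            - 2 * ((b z t)^4 - ((a z t)^2 - (c z t)^2)^2) / ((a z t)^2 * b z t * (c z t)^2) \<and>
        dt T c z t = ds \<phi> (ds \<phi> c) z t
            + ds \<phi> c z t * (ds \<phi> a z t / a z t + ds \<phi> b z t / b z t)
            - 2 * ((c z t)^4 - ((a z t)^2 - (b z t)^2)^2) / ((a z t)^2 * (b z t)^2 * c z t) \<and>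
        dt T \<phi> z t = \<phi> z t * (ds \<phi> (ds \<phi> a) z t / a z t
            + ds \<phi> (ds \<phi> b) z t / b z t + ds \<phi> (ds \<phi> c) z t / c z t))"

end

theory Submission
  imports Defs "HOL-Library.Periodic_Fun"
begin

(* Let M = max(a, b, c). At a spatial maximum of M, attained say by a, the gradient term of
   the a-equation vanishes and the diffusion term is nonpositive, while a >= b, c gives
   b^2 c^2 <= a^4 - (b^2 - c^2)^2, so the reaction term yields d/dt a^2 <= -4. Hence, for k < 4,
   M^2 + k t can never reach a level above max M(., 0)^2 for the first time; letting k -> 4
   gives 4 t <= max M(., 0)^2 for all t < T. The ordering a <= b <= c is only used at t = 0,
   to identify max M(., 0) with max c(., 0). *)

lemma square_mult_square_le_fourth_power_diff:
  fixes x y w :: real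
  assumes "0 < y" "y \<le> x" "0 < w" "w \<le> x"
  shows "y^2 * w^2 \<le> x^4 - (y^2 - w^2)^2"
proof -
  have "y^2 * w^2 + (y^2 - w^2)^2 \<le> max (y^4) (w^4)"
  proof (cases "w \<le> y")
    case True
    then have "w^2 * w^2 \<le> y^2 * w^2" using assms by (intro mult_right_mono power_mono) auto
    then show ?thesis by (simp add: power2_eq_square power4_eq_xxxx algebra_simps)
  next
    case False
    then have "y^2 * y^2 \<le> y^2 * w^2" using assms by (intro mult_left_mono power_mono) auto
    then show ?thesis by (simp add: power2_eq_square power4_eq_xxxx algebra_simps)
  qed
  also have "\<dots> \<le> x^4" using assms by (simp add: power_mono)
  finally show ?thesis by simp
qed

lemma reaction_term_lower_bound:
  fixes x y w :: real
  assumes "0 < y" "y \<le> x" "0 < w" "w \<le> x"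
  shows "4 \<le> 2 * x * (2 * (x^4 - (y^2 - w^2)^2) / (x * y^2 * w^2))"
proof -
  have "2 * x * (2 * (x^4 - (y^2 - w^2)^2) / (x * y^2 * w^2))
      = 4 * (x^4 - (y^2 - w^2)^2) / (y^2 * w^2)"
    using assms by (simp add: field_simps)
  moreover have "4 * (y^2 * w^2) \<le> 4 * (x^4 - (y^2 - w^2)^2)"
    using square_mult_square_le_fourth_power_diff[OF assms] by simp
  ultimately show ?thesis using assms by (simp add: le_divide_eq)
qed

lemma deriv2_nonpos_at_local_max:
  fixes f f' :: "real \<Rightarrow> real"
  assumes f: "\<And>x. (f has_real_derivative f' x) (at x)"
    and f': "(f' has_real_derivative D) (at x0)"
    and "0 < \<delta>" and max: "\<forall>y. \<bar>x0 - y\<bar> < \<delta> \<longrightarrow> f y \<le> f x0"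
  shows "D \<le> 0"
proof (rule ccontr)
  assume "\<not> D \<le> 0"
  have "f' x0 = 0" using DERIV_local_max[OF f \<open>0 < \<delta>\<close> max] .
  moreover obtain d where "0 < d" and inc: "\<forall>h>0. h < d \<longrightarrow> f' x0 < f' (x0 + h)"
    using DERIV_pos_inc_right[OF f'] \<open>\<not> D \<le> 0\<close> by force
  define h where "h = min d \<delta> / 2"
  have h: "0 < h" "h < d" "h < \<delta>" using \<open>0 < d\<close> \<open>0 < \<delta>\<close> by (auto simp: h_def)
  obtain \<xi> where \<xi>: "x0 < \<xi>" "\<xi> < x0 + h" "f (x0 + h) - f x0 = h * f' \<xi>"
    using MVT2[of x0 "x0 + h" f f'] f h by auto
  ultimately have "0 < f' \<xi>"
    using inc[rule_format, of "\<xi> - x0"] h by simp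
  then have "f x0 < f (x0 + h)" using mult_pos_pos[OF \<open>0 < h\<close>] \<xi>(3) by fastforce
  then show False using max[rule_format, of "x0 + h"] h by simp
qed

lemma has_real_derivative_nonneg_at_left_max:
  fixes h :: "real \<Rightarrow> real"
  assumes "(h has_real_derivative D) (at t within S)"
    and "s0 < t" "{s0..<t} \<subseteq> S" and max: "\<forall>s\<in>{s0..<t}. h s \<le> h t"
  shows "0 \<le> D"
proof (rule ccontr)
  assume "\<not> 0 \<le> D"
  then obtain d where "0 < d" and dec: "\<forall>e>0. t - e \<in> S \<longrightarrow> e < d \<longrightarrow> h t < h (t - e)"
    using has_real_derivative_neg_dec_left[OF assms(1)] by force
  define e where "e = min d (t - s0) / 2"
  have "0 < e" "e < d" "e < t - s0" using \<open>0 < d\<close> \<open>s0 < t\<close> by (auto simp: e_def)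
  then have "t - e \<in> {s0..<t}" by simp
  then have "h t < h (t - e)" "h (t - e) \<le> h t"
    using dec \<open>0 < e\<close> \<open>e < d\<close> \<open>{s0..<t} \<subseteq> S\<close> max by blast+
  then show False by simp
qed

lemma periodic_le_on_period:
  fixes f :: "real \<Rightarrow> real"
  assumes "\<And>x. f (x + p) = f x" "0 < p" "\<forall>x\<in>{0..p}. f x \<le> M"
  shows "f x \<le> M"
proof -
  interpret periodic_fun_simple f p using assms(1) by unfold_locales
  define n where "n = \<lfloor>x / p\<rfloor>"
  have "of_int n \<le> x / p" "x / p < of_int n + 1"
    unfolding n_def by linarith+
  then have "of_int n * p \<le> x" "x < (of_int n + 1) * p"
    using assms(2) by (simp_all add: pos_le_divide_eq pos_divide_less_eq)
  then have "x - of_int n * p \<in> {0..p}" by (simp add: distrib_right)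
  then have "f (x - of_int n * p) \<le> M" using assms(3) by blast
  moreover have "f (x - of_int n * p) = f x" by (rule minus_of_int)
  ultimately show ?thesis by simp
qed

lemma first_hitting_time:
  fixes Q :: "'a::topological_space \<times> real \<Rightarrow> real"
  assumes "compact A" and cont: "continuous_on (A \<times> {0..t1}) Q"
    and "z1 \<in> A" "0 \<le> t1" "L \<le> Q (z1, t1)" and init: "\<forall>z\<in>A. Q (z, 0) < L"
  obtains zs ts where "zs \<in> A" "0 < ts" "ts \<le> t1" "L \<le> Q (zs, ts)"
    "\<forall>z\<in>A. \<forall>s\<in>{0..<ts}. Q (z, s) < L" "\<forall>z\<in>A. Q (z, ts) \<le> L"
proof -
  define K where "K = (A \<times> {0..t1}) \<inter> Q -` {L..}"
  have "closedin (top_of_set (A \<times> {0..t1})) K"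
    unfolding K_def by (rule continuous_closedin_preimage[OF cont closed_atLeast])
  then have "compact K" by (rule closedin_compact[OF compact_Times[OF \<open>compact A\<close> compact_Icc]])
  moreover have "(z1, t1) \<in> K" using assms unfolding K_def by simp
  ultimately obtain p where "p \<in> K" and first: "\<forall>q\<in>K. snd p \<le> snd q"
    using continuous_attains_inf[OF _ _ continuous_on_snd[OF continuous_on_id]] by blast
  obtain zs ts where p: "p = (zs, ts)" by fastforce
  have hit: "zs \<in> A" "0 \<le> ts" "ts \<le> t1" "L \<le> Q (zs, ts)"
    using \<open>p \<in> K\<close> unfolding K_def p by auto
  have before: "\<forall>z\<in>A. \<forall>s\<in>{0..<ts}. Q (z, s) < L"
    using first hit unfolding K_def p by force
  have "0 < ts" using hit init by (cases "ts = 0") auto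
  have "Q (z, ts) \<le> L" if "z \<in> A" for z
  proof -
    have "continuous_on {0..ts} (\<lambda>s. Q (z, s))"
      using \<open>z \<in> A\<close> hit
      by (intro continuous_on_compose2[OF cont]) (auto intro!: continuous_intros)
    then have "((\<lambda>s. Q (z, s)) \<longlongrightarrow> Q (z, ts)) (at ts within {0..ts})"
      using \<open>0 < ts\<close> unfolding continuous_on_def by simp
    then have "((\<lambda>s. Q (z, s)) \<longlongrightarrow> Q (z, ts)) (at ts within {0..<ts})"
      by (rule tendsto_within_subset) auto
    moreover have "eventually (\<lambda>s. Q (z, s) \<le> L) (at ts within {0..<ts})"
      using before \<open>z \<in> A\<close> unfolding eventually_at_filter
      by (auto intro!: always_eventually less_imp_le)
    moreover have "\<not> trivial_limit (at ts within {0..<ts})"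
      using \<open>0 < ts\<close> by (simp add: trivial_limit_within)
    ultimately show ?thesis by (rule tendsto_upperbound)
  qed
  then show ?thesis using that hit before \<open>0 < ts\<close> by blast
qed

lemma iterd_dz: "iterd T w (dz f) = iterd T (w @ [True]) f"
proof (induction w)
  case (Cons d w)
  then show ?case by (cases d) simp_all
qed simp

lemma smooth_RT_dz: "smooth_RT T f \<Longrightarrow> smooth_RT T (dz f)"
  unfolding smooth_RT_def iterd_dz by blast

lemma smooth_RT_continuous_on:
  "smooth_RT T f \<Longrightarrow> continuous_on (UNIV \<times> {0..<T}) (\<lambda>p. f (fst p) (snd p))"
  unfolding smooth_RT_def by (metis iterd.simps(1))

lemma smooth_RT_continuous_on_slice:
  assumes "smooth_RT T f" "t \<in> {0..<T}"
  shows "continuous_on S (\<lambda>z. f z t)"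
proof -
  have "continuous_on S (\<lambda>z. (\<lambda>p. f (fst p) (snd p)) (z, t))"
    using assms(2)
    by (intro continuous_on_compose2[OF smooth_RT_continuous_on[OF assms(1)]])
      (auto intro!: continuous_intros)
  then show ?thesis by simp
qed

lemma smooth_RT_has_dz:
  assumes "smooth_RT T f" "t \<in> {0..<T}"
  shows "((\<lambda>x. f x t) has_real_derivative dz f z t) (at z)"
  using assms unfolding smooth_RT_def dz_def
  by (metis DERIV_deriv_iff_real_differentiable iterd.simps(1))

lemma smooth_RT_has_dt:
  assumes "smooth_RT T f" "t \<in> {0..<T}"
  shows "((\<lambda>s. f z s) has_real_derivative dt T f z t) (at t within {0..<T})"
  using assms unfolding smooth_RT_def dt_def has_real_derivative_iff_has_vector_derivative
  by (metis iterd.simps(1) vector_derivative_works)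

lemma ds_ds_at_critical_point:
  assumes "smooth_RT T \<phi>" "smooth_RT T f" "t \<in> {0..<T}"
    and "dz f z0 t = 0" "\<phi> z0 t \<noteq> 0"
  shows "ds \<phi> (ds \<phi> f) z0 t = dz (dz f) z0 t / (\<phi> z0 t)^2"
proof -
  have "((\<lambda>x. dz f x t / \<phi> x t) has_real_derivative dz (dz f) z0 t / \<phi> z0 t) (at z0)"
    using DERIV_divide[OF smooth_RT_has_dz[OF smooth_RT_dz[OF assms(2)] assms(3), of z0]
        smooth_RT_has_dz[OF assms(1,3), of z0]] assms(4,5)
    by (simp add: power2_eq_square)
  then show ?thesis
    unfolding ds_def[of \<phi> "ds \<phi> f"] dz_def[of "ds \<phi> f"] ds_def[of \<phi> f]
    by (simp add: DERIV_imp_deriv power2_eq_square)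
qed

lemma RF_solution_smooth:
  "RF_solution T \<phi> a b c \<Longrightarrow> smooth_RT T \<phi> \<and> smooth_RT T a \<and> smooth_RT T b \<and> smooth_RT T c"
  unfolding RF_solution_def by blast

lemma RF_solution_pos:
  "RF_solution T \<phi> a b c \<Longrightarrow> t \<in> {0..<T} \<Longrightarrow> 0 < \<phi> z t \<and> 0 < a z t \<and> 0 < b z t \<and> 0 < c z t"
  unfolding RF_solution_def by blast

lemma RF_solution_periodic:
  "RF_solution T \<phi> a b c \<Longrightarrow> t \<in> {0..<T} \<Longrightarrow>
    a (z + 2*pi) t = a z t \<and> b (z + 2*pi) t = b z t \<and> c (z + 2*pi) t = c z t"
  unfolding RF_solution_def by blast

lemma RF_solution_swap12: "RF_solution T \<phi> a b c \<Longrightarrow> RF_solution T \<phi> b a c"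
  unfolding RF_solution_def by (simp add: ac_simps power2_commute)

lemma RF_solution_swap13: "RF_solution T \<phi> a b c \<Longrightarrow> RF_solution T \<phi> c b a"
  unfolding RF_solution_def by (simp add: ac_simps power2_commute)

lemma RF_solution_dt_sq_le_at_max:
  assumes RF: "RF_solution T \<phi> a b c" and t: "t \<in> {0..<T}"
    and dominant: "b z0 t \<le> a z0 t" "c z0 t \<le> a z0 t"
    and max: "\<forall>z. a z t \<le> a z0 t"
  shows "2 * a z0 t * dt T a z0 t \<le> -4"
proof -
  have sm: "smooth_RT T \<phi>" "smooth_RT T a" using RF_solution_smooth[OF RF] by simp_all
  have pos: "0 < \<phi> z0 t" "0 < a z0 t" "0 < b z0 t" "0 < c z0 t"
    using RF_solution_pos[OF RF t] by simp_all
  have pde: "dt T a z0 t = ds \<phi> (ds \<phi> a) z0 t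
      + ds \<phi> a z0 t * (ds \<phi> b z0 t / b z0 t + ds \<phi> c z0 t / c z0 t)
      - 2 * ((a z0 t)^4 - ((b z0 t)^2 - (c z0 t)^2)^2) / (a z0 t * (b z0 t)^2 * (c z0 t)^2)"
    using RF t unfolding RF_solution_def by blast
  have da: "((\<lambda>x. a x t) has_real_derivative dz a x t) (at x)" for x
    using smooth_RT_has_dz[OF sm(2) t] .
  have dda: "((\<lambda>x. dz a x t) has_real_derivative dz (dz a) z0 t) (at z0)"
    using smooth_RT_has_dz[OF smooth_RT_dz[OF sm(2)] t] .
  have local_max: "\<forall>y. \<bar>z0 - y\<bar> < 1 \<longrightarrow> a y t \<le> a z0 t" using max by blast
  have crit: "dz a z0 t = 0"
    using DERIV_local_max[OF da zero_less_one local_max] .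
  have "dz (dz a) z0 t \<le> 0"
    using deriv2_nonpos_at_local_max[OF da dda zero_less_one local_max] .
  moreover have "ds \<phi> (ds \<phi> a) z0 t = dz (dz a) z0 t / (\<phi> z0 t)^2"
    using ds_ds_at_critical_point[OF sm t crit] pos(1) by simp
  ultimately have "2 * a z0 t * ds \<phi> (ds \<phi> a) z0 t \<le> 0"
    using pos by (simp add: mult_nonneg_nonpos divide_nonpos_pos)
  moreover have "4 \<le> 2 * a z0 t *
      (2 * ((a z0 t)^4 - ((b z0 t)^2 - (c z0 t)^2)^2) / (a z0 t * (b z0 t)^2 * (c z0 t)^2))"
    using reaction_term_lower_bound pos dominant by blast
  ultimately show ?thesis
    using pde crit unfolding ds_def[of \<phi> a] by (simp add: right_diff_distrib)
qed

definition max_scale ::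
  "(real \<Rightarrow> real \<Rightarrow> real) \<Rightarrow> (real \<Rightarrow> real \<Rightarrow> real) \<Rightarrow> (real \<Rightarrow> real \<Rightarrow> real) \<Rightarrow> real \<Rightarrow> real \<Rightarrow> real"
  where "max_scale a b c z t = max (a z t) (max (b z t) (c z t))"

lemma RF_solution_max_scale_at_max:
  assumes RF: "RF_solution T \<phi> a b c" and t: "t \<in> {0..<T}"
    and max: "\<forall>z. max_scale a b c z t \<le> max_scale a b c z0 t"
  obtains X where "X \<in> {a, b, c}" "X z0 t = max_scale a b c z0 t" "2 * X z0 t * dt T X z0 t \<le> -4"
proof -
  have dominated: "\<forall>z. X z t \<le> X z0 t" if "X \<in> {a, b, c}" "X z0 t = max_scale a b c z0 t" for X
    using max that unfolding max_scale_def by fastforce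
  consider "a z0 t = max_scale a b c z0 t" | "b z0 t = max_scale a b c z0 t"
    | "c z0 t = max_scale a b c z0 t"
    unfolding max_scale_def by linarith
  then show ?thesis
  proof cases
    case 1
    then have "b z0 t \<le> a z0 t" "c z0 t \<le> a z0 t" by (auto simp: max_scale_def)
    with 1 show ?thesis
      using that[of a] RF_solution_dt_sq_le_at_max[OF RF t _ _ dominated[of a]] by simp
  next
    case 2
    then have "a z0 t \<le> b z0 t" "c z0 t \<le> b z0 t" by (auto simp: max_scale_def)
    with 2 show ?thesis
      using that[of b] RF_solution_dt_sq_le_at_max[OF RF_solution_swap12[OF RF] t _ _ dominated[of b]]
      by simp
  next
    case 3
    then have "b z0 t \<le> c z0 t" "a z0 t \<le> c z0 t" by (auto simp: max_scale_def)
    with 3 show ?thesis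
      using that[of c] RF_solution_dt_sq_le_at_max[OF RF_solution_swap13[OF RF] t _ _ dominated[of c]]
      by simp
  qed
qed

lemma RF_solution_max_scale_pos:
  assumes "RF_solution T \<phi> a b c" "t \<in> {0..<T}"
  shows "0 < max_scale a b c z t"
  using RF_solution_pos[OF assms, of z] unfolding max_scale_def by (simp add: less_max_iff_disj)

lemma RF_solution_max_scale_periodic:
  assumes "RF_solution T \<phi> a b c" "t \<in> {0..<T}"
  shows "max_scale a b c (z + 2*pi) t = max_scale a b c z t"
  using RF_solution_periodic[OF assms, of z] unfolding max_scale_def by simp

lemma RF_solution_max_scale_continuous_on:
  assumes "RF_solution T \<phi> a b c"
  shows "continuous_on (UNIV \<times> {0..<T}) (\<lambda>p. max_scale a b c (fst p) (snd p))"
  using RF_solution_smooth[OF assms] unfolding max_scale_def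
  by (intro continuous_intros smooth_RT_continuous_on) simp_all

lemma RF_solution_max_scale_sq_bound:
  assumes RF: "RF_solution T \<phi> a b c" and "k < 4"
    and init: "\<forall>z\<in>{0..2*pi}. (max_scale a b c z 0)^2 < L"
    and t1: "t1 \<in> {0..<T}" and z1: "z1 \<in> {0..2*pi}"
  shows "(max_scale a b c z1 t1)^2 + k * t1 < L"
proof (rule ccontr)
  assume contra: "\<not> ?thesis"
  define Q where "Q = (\<lambda>p. (max_scale a b c (fst p) (snd p))^2 + k * snd p)"
  have "continuous_on ({0..2*pi} \<times> {0..t1}) Q"
    unfolding Q_def using t1
    by (intro continuous_intros continuous_on_subset[OF RF_solution_max_scale_continuous_on[OF RF]])
      auto
  then obtain zs ts where zs: "zs \<in> {0..2*pi}" and ts: "0 < ts" "ts \<le> t1"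
    and hit: "L \<le> Q (zs, ts)" and before: "\<forall>z\<in>{0..2*pi}. \<forall>s\<in>{0..<ts}. Q (z, s) < L"
    and at: "\<forall>z\<in>{0..2*pi}. Q (z, ts) \<le> L"
    using first_hitting_time[of "{0..2*pi}" t1 Q z1 L] z1 t1 init contra
    unfolding Q_def by auto
  have tsT: "ts \<in> {0..<T}" using ts t1 by simp
  have "max_scale a b c z ts \<le> max_scale a b c zs ts" for z
  proof (rule periodic_le_on_period[where f = "\<lambda>z. max_scale a b c z ts" and p = "2*pi"])
    show "max_scale a b c (z + 2*pi) ts = max_scale a b c z ts" for z
      using RF_solution_max_scale_periodic[OF RF tsT] .
    show "\<forall>z\<in>{0..2*pi}. max_scale a b c z ts \<le> max_scale a b c zs ts"
    proof
      fix z assume "z \<in> {0..2*pi}"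
      then have "Q (z, ts) \<le> Q (zs, ts)" using at hit by fastforce
      then have "(max_scale a b c z ts)^2 \<le> (max_scale a b c zs ts)^2" unfolding Q_def by simp
      then show "max_scale a b c z ts \<le> max_scale a b c zs ts"
        using RF_solution_max_scale_pos[OF RF tsT, of zs] by (auto intro: power2_le_imp_le)
    qed
  qed simp
  then obtain X where X: "X \<in> {a, b, c}" "X zs ts = max_scale a b c zs ts"
    and decay: "2 * X zs ts * dt T X zs ts \<le> -4"
    using RF_solution_max_scale_at_max[OF RF tsT] by blast
  have smX: "smooth_RT T X" using X(1) RF_solution_smooth[OF RF] by auto
  have "((\<lambda>s. (X zs s)^2 + k * s) has_real_derivative 2 * X zs ts * dt T X zs ts + k)
      (at ts within {0..<T})"
    by (auto intro!: derivative_eq_intros smooth_RT_has_dt[OF smX tsT])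
  moreover have "(X zs s)^2 + k * s \<le> (X zs ts)^2 + k * ts" if s: "s \<in> {0..<ts}" for s
  proof -
    have "0 < X zs s" "X zs s \<le> max_scale a b c zs s"
      using X(1) RF_solution_pos[OF RF] s ts t1 by (auto simp: max_scale_def)
    then have "(X zs s)^2 + k * s \<le> Q (zs, s)" unfolding Q_def by (simp add: power_mono)
    also have "\<dots> < L" using before zs s by blast
    also have "\<dots> \<le> Q (zs, ts)" by (rule hit)
    finally show ?thesis using X(2) unfolding Q_def by simp
  qed
  ultimately have "0 \<le> 2 * X zs ts * dt T X zs ts + k"
    using ts t1 by (intro has_real_derivative_nonneg_at_left_max[of _ _ ts "{0..<T}" 0]) auto
  then show False using decay \<open>k < 4\<close> by simp
qed

lemma RF_solution_lifetime_bound: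
  assumes RF: "RF_solution T \<phi> a b c"
    and init: "\<forall>z\<in>{0..2*pi}. max_scale a b c z 0 \<le> M" and t: "t \<in> {0..<T}"
  shows "4 * t \<le> M^2"
proof (rule field_le_epsilon)
  fix e :: real
  assume "0 < e"
  define \<delta> where "\<delta> = e / (1 + t)"
  have "0 < \<delta>" using \<open>0 < e\<close> t by (simp add: \<delta>_def)
  have "(max_scale a b c z 0)^2 < M^2 + \<delta>" if "z \<in> {0..2*pi}" for z
  proof -
    have "(max_scale a b c z 0)^2 \<le> M^2"
      using init that RF_solution_max_scale_pos[OF RF, of 0 z] t by (auto intro: power_mono)
    then show ?thesis using \<open>0 < \<delta>\<close> by simp
  qed
  then have "(max_scale a b c 0 t)^2 + (4 - \<delta>) * t < M^2 + \<delta>"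
    using RF_solution_max_scale_sq_bound[OF RF _ _ t] \<open>0 < \<delta>\<close> by simp
  then have "(4 - \<delta>) * t < M^2 + \<delta>" using zero_le_power2[of "max_scale a b c 0 t"] by linarith
  then have "4 * t < M^2 + \<delta> * (1 + t)" by (simp add: algebra_simps)
  also have "\<delta> * (1 + t) = e" using t by (simp add: \<delta>_def)
  finally show "4 * t \<le> M^2 + e" by simp
qed

theorem corollary4p4:
  fixes T :: real and \<phi> a b c :: "real \<Rightarrow> real \<Rightarrow> real"
  assumes "0 < T"
    and "RF_solution T \<phi> a b c"
    and "\<forall>z. a z 0 \<le> b z 0 \<and> b z 0 \<le> c z 0"
  shows "T \<le> (SUP z\<in>{0..2*pi}. c z 0)^2 / 4"
proof -
  have "continuous_on {0..2*pi} (\<lambda>z. c z 0)"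
    using RF_solution_smooth[OF assms(2)] \<open>0 < T\<close> by (auto intro: smooth_RT_continuous_on_slice)
  then have "bdd_above ((\<lambda>z. c z 0) ` {0..2*pi})"
    by (intro bounded_imp_bdd_above compact_imp_bounded compact_continuous_image) auto
  then have "c z 0 \<le> (SUP z\<in>{0..2*pi}. c z 0)" if "z \<in> {0..2*pi}" for z
    using cSUP_upper[OF that] by blast
  moreover have "max_scale a b c z 0 = c z 0" for z
  proof -
    have "a z 0 \<le> b z 0" "b z 0 \<le> c z 0" using assms(3) by blast+
    then show ?thesis unfolding max_scale_def by (simp add: max_def)
  qed
  ultimately have init: "\<forall>z\<in>{0..2*pi}. max_scale a b c z 0 \<le> (SUP z\<in>{0..2*pi}. c z 0)"
    by simp
  have "t \<le> (SUP z\<in>{0..2*pi}. c z 0)^2 / 4" if "t \<in> {0..<T}" for t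
    using RF_solution_lifetime_bound[OF assms(2) init that] by simp
  then show ?thesis
    by (intro dense_le_bounded[OF \<open>0 < T\<close>]) auto
qed

end
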